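(* Let $\mathbf x\in\Omega$ and $\mathbf u=g(\mathbf x)$. (i) If $(X_j)_{j\ge1}$ is the $M$-decomposition of $\mathbf x$, then the $M'$-decomposition of $g(\mathbf x)$ is $(g_0(X_j))_{j\ge1}$. (ii) If $(U_j)_{j\ge1}$ is the $M'$-decomposition of $\mathbf u\in\Omega$ and $h(\mathbf u)=\prod_{j\ge1}g_0^{-1}(U_j)$, then the $M$-decomposition of $h(\mathbf u)$ is $(g_0^{-1}(U_j))_{j\ge1}$. (iii) The map $g:\Omega\to\Omega$ is a bijection.
   Context: Let $\Sigma=\{1,\dots,N\}$ with $N\ge4$, and let $\tau,\kappa,\alpha,\gamma\in\Sigma$ be distinct except that $\tau=\alpha$ is allowed. $\Sigma^*$ denotes finite words, $a^k$ the word of $k$ copies of $a$, and $\Omega=\{\omega\kappa^\infty:\omega\in\Sigma^*\}$. Let $\mathcal C_M=\{\tau\gamma^k:k\ge2\}\cup\{\kappa\alpha^k\kappa\gamma:k\ge0\}$ and $\mathcal C_{M'}=\{\kappa\alpha^k\kappa\gamma:k\ge0\}\cup\{\kappa\alpha^k\kappa\gamma\gamma:k\ge0\}\cup\{\tau\gamma\gamma\}$; letters of $\Sigma$ are regarded as one-letter words. The $M$-decomposition of $\mathbf x\in\Omega$ is $\mathbf x=X_1X_2\cdots$ where $X_1$ is the longest prefix of $\mathbf x$ in $\mathcal C_M\cup\Sigma$, and inductively $X_k$ is the longest prefix of $X_kX_{k+1}\cdots$ (the remaining tail) lying in $\mathcal C_M\cup\Sigma$. The $M'$-decomposition is defined the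 same way using $\mathcal C_{M'}\cup\Sigma$. Define the bijection $g_0:\mathcal C_M\cup\Sigma\to\mathcal C_{M'}\cup\Sigma$ by $\tau\gamma^k\mapsto\kappa\alpha^{k-2}\kappa\gamma$ ($k\ge2$), $\kappa\alpha^k\kappa\gamma\mapsto\kappa\alpha^{k-1}\kappa\gamma\gamma$ ($k\ge1$), $\kappa\kappa\gamma\mapsto\tau\gamma\gamma$, $i\mapsto i$ ($i\in\Sigma$). Define $g:\Omega\to\Omega$ by $g(\mathbf x)=\prod_{j\ge1}g_0(X_j)$ (concatenation), where $(X_j)$ is the $M$-decomposition of $\mathbf x$. *)

theory Defs
  imports Main
begin

text \<open>Decompositions are indexed from 0
  (the paper's \<open>X_1\<close> is \<open>decomp D x 0\<close>).\<close>

definition Alph :: "nat \<Rightarrow> nat set" where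
  "Alph N = {1..N}"

definition letters :: "nat \<Rightarrow> nat list set" where
  "letters N = {[a] | a. a \<in> Alph N}"

definition Omega :: "nat \<Rightarrow> nat \<Rightarrow> (nat \<Rightarrow> nat) set" where
  "Omega N \<kappa> = {x. (\<forall>i. x i \<in> Alph N) \<and> (\<exists>n. \<forall>i\<ge>n. x i = \<kappa>)}"

definition CM :: "nat \<Rightarrow> nat \<Rightarrow> nat \<Rightarrow> nat \<Rightarrow> nat list set" where
  "CM \<tau> \<kappa> \<alpha> \<gamma> = {\<tau> # replicate k \<gamma> | k. k \<ge> 2}
     \<union> {\<kappa> # replicate k \<alpha> @ [\<kappa>, \<gamma>] | k. True}"

definition CM' :: "nat \<Rightarrow> nat \<Rightarrow> nat \<Rightarrow> nat \<Rightarrow> nat list set" where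
  "CM' \<tau> \<kappa> \<alpha> \<gamma> = {\<kappa> # replicate k \<alpha> @ [\<kappa>, \<gamma>] | k. True}
     \<union> {\<kappa> # replicate k \<alpha> @ [\<kappa>, \<gamma>, \<gamma>] | k. True}
     \<union> {[\<tau>, \<gamma>, \<gamma>]}"

definition dec_len :: "nat list set \<Rightarrow> (nat \<Rightarrow> nat) \<Rightarrow> nat" where
  "dec_len D x = (GREATEST n. 0 < n \<and> map x [0..<n] \<in> D)"

primrec dec_pos :: "nat list set \<Rightarrow> (nat \<Rightarrow> nat) \<Rightarrow> nat \<Rightarrow> nat" where
  "dec_pos D x 0 = 0"
| "dec_pos D x (Suc j) = dec_pos D x j + dec_len D (\<lambda>i. x (dec_pos D x j + i))"

text \<open>The \<open>D\<close>-decomposition: the j-th factor (0-indexed) of the greedy longest-prefix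
  parsing of \<open>x\<close> into words of \<open>D\<close>.\<close>
definition decomp :: "nat list set \<Rightarrow> (nat \<Rightarrow> nat) \<Rightarrow> nat \<Rightarrow> nat list" where
  "decomp D x j = map x [dec_pos D x j ..< dec_pos D x (Suc j)]"

definition starts :: "(nat \<Rightarrow> 'a list) \<Rightarrow> nat \<Rightarrow> nat" where
  "starts W j = (\<Sum>i<j. length (W i))"

definition inf_concat :: "(nat \<Rightarrow> 'a list) \<Rightarrow> nat \<Rightarrow> 'a" where
  "inf_concat W n = (let j = (LEAST j. n < starts W (Suc j)) in W j ! (n - starts W j))"

definition g0 :: "nat \<Rightarrow> nat \<Rightarrow> nat \<Rightarrow> nat \<Rightarrow> nat list \<Rightarrow> nat list" where
  "g0 \<tau> \<kappa> \<alpha> \<gamma> w =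
    (if \<exists>k\<ge>2. w = \<tau> # replicate k \<gamma> then \<kappa> # replicate (length w - 3) \<alpha> @ [\<kappa>, \<gamma>]
     else if \<exists>k\<ge>1. w = \<kappa> # replicate k \<alpha> @ [\<kappa>, \<gamma>]
       then \<kappa> # replicate (length w - 4) \<alpha> @ [\<kappa>, \<gamma>, \<gamma>]
     else if w = [\<kappa>, \<kappa>, \<gamma>] then [\<tau>, \<gamma>, \<gamma>]
     else w)"

definition g0_inv :: "nat \<Rightarrow> nat \<Rightarrow> nat \<Rightarrow> nat \<Rightarrow> nat \<Rightarrow> nat list \<Rightarrow> nat list" where
  "g0_inv N \<tau> \<kappa> \<alpha> \<gamma> = the_inv_into (CM \<tau> \<kappa> \<alpha> \<gamma> \<union> letters N) (g0 \<tau> \<kappa> \<alpha> \<gamma>)"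

definition gmap :: "nat \<Rightarrow> nat \<Rightarrow> nat \<Rightarrow> nat \<Rightarrow> nat \<Rightarrow> (nat \<Rightarrow> nat) \<Rightarrow> (nat \<Rightarrow> nat)" where
  "gmap N \<tau> \<kappa> \<alpha> \<gamma> x =
     inf_concat (\<lambda>j. g0 \<tau> \<kappa> \<alpha> \<gamma> (decomp (CM \<tau> \<kappa> \<alpha> \<gamma> \<union> letters N) x j))"

definition hmap :: "nat \<Rightarrow> nat \<Rightarrow> nat \<Rightarrow> nat \<Rightarrow> nat \<Rightarrow> (nat \<Rightarrow> nat) \<Rightarrow> (nat \<Rightarrow> nat)" where
  "hmap N \<tau> \<kappa> \<alpha> \<gamma> u =
     inf_concat (\<lambda>j. g0_inv N \<tau> \<kappa> \<alpha> \<gamma> (decomp (CM' \<tau> \<kappa> \<alpha> \<gamma> \<union> letters N) u j))"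

end

(*
  Both codes M and M' extend
  a codeword u to a longer codeword in only three ways: [tau] by gamma gamma ..., [kappa] by
  alpha^j kappa gamma ..., and a long codeword by a further gamma. The words gamma, gamma gamma
  and alpha^j kappa gamma are "transparent": g0 and its inverse send every codeword of length
  at least 2 to a word beginning with kappa alpha, kappa kappa or tau gamma, and fix letters, so
  if g(z) begins with a transparent word then so does z. Hence an M'-codeword at the start of g(x) longer than g0(X_1) would produce an
  M-codeword at the start of x longer than X_1, contradicting greediness; so g0(X_1) is the
  first M'-block and (i) follows by shifting. The same argument with the roles of M and M'
  exchanged and g0 replaced by its inverse gives (ii), and (i), (ii) together with the
  bijectivity of g0 show that h inverts g.
*)
theory Submission
  imports Defs "HOL-Library.Sublist"
begin

lemma map_upt_add:
  "map y [0..<L + m] = map y [0..<L] @ map (\<lambda>i. y (L + i)) [0..<m]"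
  by (induction m) simp_all

lemma map_upt_prefix:
  assumes "prefix v (map g [0..<m])"
  shows "map g [0..<length v] = v"
proof -
  obtain t where t: "map g [0..<m] = v @ t" using assms by (auto simp: prefix_def)
  then have "take (length v) (map g [0..<m]) = v" by simp
  moreover have "length v \<le> m" using arg_cong[OF t, of length] by simp
  ultimately show ?thesis by (simp add: take_map)
qed

lemma last_mem_if_append_eq_snoc:
  assumes "u @ s = w @ [c]" "s \<noteq> []" "u \<noteq> []"
  shows "last u \<in> set w"
proof -
  have "w = u @ butlast s" using arg_cong[OF assms(1), of butlast] assms(2) by (simp add: butlast_append)
  then show ?thesis using assms(3) by simp
qed

section \<open>Greedy decompositions\<close>

lemma dec_pos_mono: "dec_pos D x k \<le> dec_pos D x (k + j)"
  by (induction j) auto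

lemma dec_pos_shift:
  "dec_pos D (\<lambda>i. x (dec_pos D x k + i)) j = dec_pos D x (k + j) - dec_pos D x k"
proof (induction j)
  case (Suc j)
  have "dec_pos D x k \<le> dec_pos D x (k + j)" by (rule dec_pos_mono)
  then show ?case using Suc by (simp add: add.assoc[symmetric])
qed simp

lemma decomp_shift: "decomp D (\<lambda>i. x (dec_pos D x k + i)) j = decomp D x (k + j)"
proof -
  have "dec_pos D x k \<le> dec_pos D x (k + j)" "dec_pos D x (k + j) \<le> dec_pos D x (Suc (k + j))"
    using dec_pos_mono[of D x k j] dec_pos_mono[of D x "k + j" 1] by simp_all
  then show ?thesis unfolding decomp_def dec_pos_shift by (auto simp: list_eq_iff_nth_eq)
qed

lemma decomp_0: "decomp D x 0 = map x [0..<dec_len D x]"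
  by (simp add: decomp_def)

lemma decomp_Suc: "decomp D x (Suc j) = decomp D (\<lambda>i. x (dec_len D x + i)) j"
  using decomp_shift[of D x 1 j] by simp

lemma starts_Suc: "starts W (Suc j) = length (W 0) + starts (\<lambda>j. W (Suc j)) j"
  unfolding starts_def by (rule sum.lessThan_Suc_shift)

lemma le_starts: "\<forall>j. W j \<noteq> [] \<Longrightarrow> j \<le> starts W j"
proof (induction j)
  case (Suc j)
  then have "Suc 0 \<le> length (W j)" "j \<le> starts W j" by (simp_all add: Suc_le_eq)
  then show ?case unfolding starts_def by simp
qed simp

lemma inf_concat_unfold:
  assumes ne: "\<forall>j. W j \<noteq> []"
  shows "inf_concat W n = (if n < length (W 0) then W 0 ! n
          else inf_concat (\<lambda>j. W (Suc j)) (n - length (W 0)))"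
proof (cases "n < length (W 0)")
  case True
  have "(LEAST j. n < starts W (Suc j)) = 0"
    by (rule Least_eq_0) (use True in \<open>simp add: starts_def\<close>)
  then show ?thesis using True by (simp add: inf_concat_def starts_def)
next
  case False
  let ?W = "\<lambda>j. W (Suc j)"
  have ex: "n < starts W (Suc n)" using le_starts[OF ne, of "Suc n"] by simp
  have "(LEAST j. n < starts W (Suc j)) = Suc (LEAST m. n < starts W (Suc (Suc m)))"
    by (rule Least_Suc[of "\<lambda>j. n < starts W (Suc j)", OF ex]) (use False in \<open>simp add: starts_def\<close>)
  also have "(\<lambda>m. n < starts W (Suc (Suc m))) = (\<lambda>m. n - length (W 0) < starts ?W (Suc m))"
    using False by (auto simp: starts_Suc[of W])
  finally have LM: "(LEAST j. n < starts W (Suc j)) = Suc (LEAST m. n - length (W 0) < starts ?W (Suc m))" .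
  have "inf_concat W n = W (Suc (LEAST m. n - length (W 0) < starts ?W (Suc m)))
      ! (n - starts W (Suc (LEAST m. n - length (W 0) < starts ?W (Suc m))))"
    unfolding inf_concat_def Let_def LM ..
  also have "\<dots> = inf_concat ?W (n - length (W 0))"
    unfolding inf_concat_def Let_def starts_Suc[of W] by (simp add: diff_diff_add)
  finally show ?thesis using False by simp
qed

definition admissible_code :: "nat \<Rightarrow> nat \<Rightarrow> nat list set \<Rightarrow> bool" where
  "admissible_code N k D \<longleftrightarrow> letters N \<subseteq> D \<and> D \<subseteq> lists (Alph N) \<and> [] \<notin> D \<and>
     (\<forall>w\<in>D. 2 \<le> length w \<longrightarrow> last w \<noteq> k)"

lemma Omega_shift:
  assumes "x \<in> Omega N k"
  shows "(\<lambda>i. x (p + i)) \<in> Omega N k"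
proof -
  obtain m where "\<forall>i\<ge>m. x i = k" "\<forall>i. x i \<in> Alph N"
    using assms unfolding Omega_def by blast
  then have "\<forall>i\<ge>m. x (p + i) = k" "\<forall>i. x (p + i) \<in> Alph N" by simp_all
  then show ?thesis unfolding Omega_def by blast
qed

lemma Omega_letter:
  assumes "x \<in> Omega N k"
  shows "k \<in> Alph N"
proof -
  obtain m where "x m = k" "x m \<in> Alph N" using assms unfolding Omega_def by blast
  then show ?thesis by simp
qed

lemma dec_len_eqI:
  assumes "0 < L" "map x [0..<L] \<in> D" "\<And>n. L < n \<Longrightarrow> map x [0..<n] \<notin> D"
  shows "dec_len D x = L"
  unfolding dec_len_def
  by (rule Greatest_equality) (use assms in \<open>auto simp: not_less[symmetric]\<close>)

lemma dec_len_admissible: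
  assumes x: "x \<in> Omega N k" and D: "admissible_code N k D"
  shows "0 < dec_len D x" "map x [0..<dec_len D x] \<in> D"
    and "dec_len D x < n \<Longrightarrow> map x [0..<n] \<notin> D"
proof -
  obtain m where m: "\<forall>i\<ge>m. x i = k" and al: "\<forall>i. x i \<in> Alph N"
    using x unfolding Omega_def by auto
  let ?P = "\<lambda>n. 0 < n \<and> map x [0..<n] \<in> D"
  have P1: "?P 1" using D al unfolding admissible_code_def letters_def by auto
  have bound: "n \<le> Suc m" if "?P n" for n
  proof (rule ccontr)
    assume "\<not> n \<le> Suc m"
    then have "2 \<le> length (map x [0..<n])" "last (map x [0..<n]) = k"
      using m by (auto simp: last_map)
    then show False using D that unfolding admissible_code_def by auto
  qed
  have "?P (dec_len D x)" unfolding dec_len_def by (rule GreatestI_nat[of ?P, OF P1 bound]) auto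
  then show "0 < dec_len D x" "map x [0..<dec_len D x] \<in> D" by auto
  show "map x [0..<n] \<notin> D" if "dec_len D x < n"
    using that Greatest_le_nat[of ?P n "Suc m"] bound unfolding dec_len_def by fastforce
qed

lemma decomp_in_code:
  assumes x: "x \<in> Omega N k" and D: "admissible_code N k D"
  shows "decomp D x j \<in> D"
proof -
  have "decomp D x j = decomp D (\<lambda>i. x (dec_pos D x j + i)) 0"
    using decomp_shift[of D x j 0] by simp
  then show ?thesis
    using dec_len_admissible(2)[OF Omega_shift[OF x] D] by (simp add: decomp_0)
qed

lemma admissible_code_nonempty: "admissible_code N k D \<Longrightarrow> w \<in> D \<Longrightarrow> w \<noteq> []"
  unfolding admissible_code_def by auto

lemma admissible_code_Un_letters:
  assumes "C \<subseteq> lists (Alph N)" "\<forall>w\<in>C. w \<noteq> [] \<and> last w \<noteq> k"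
  shows "admissible_code N k (C \<union> letters N)"
  using assms unfolding admissible_code_def letters_def by auto

lemma inf_concat_decomp:
  assumes D: "admissible_code N k D" and x: "x \<in> Omega N k"
  shows "inf_concat (decomp D x) n = x n"
  using x
proof (induction n arbitrary: x rule: less_induct)
  case (less n)
  let ?L = "dec_len D x"
  have L: "0 < ?L" using dec_len_admissible(1)[OF less.prems D] .
  have ne: "\<forall>j. decomp D x j \<noteq> []"
    using decomp_in_code[OF less.prems D] admissible_code_nonempty[OF D] by blast
  have tl: "(\<lambda>j. decomp D x (Suc j)) = decomp D (\<lambda>i. x (?L + i))"
    by (simp add: decomp_Suc)
  show ?case
  proof (cases "n < ?L")
    case True
    then show ?thesis by (subst inf_concat_unfold[OF ne]) (simp add: decomp_0)
  next
    case False
    then have "inf_concat (decomp D x) n = inf_concat (decomp D (\<lambda>i. x (?L + i))) (n - ?L)"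
      by (subst inf_concat_unfold[OF ne]) (simp add: decomp_0 tl)
    also have "\<dots> = x n"
      using less.IH[of "n - ?L", OF _ Omega_shift[OF less.prems]] L False by simp
    finally show ?thesis .
  qed
qed

section \<open>Block substitutions\<close>

definition block_subst :: "nat list set \<Rightarrow> (nat list \<Rightarrow> nat list) \<Rightarrow> (nat \<Rightarrow> nat) \<Rightarrow> nat \<Rightarrow> nat" where
  "block_subst D f x = inf_concat (\<lambda>j. f (decomp D x j))"

lemma block_subst_unfold:
  assumes "\<forall>j. f (decomp D x j) \<noteq> []"
  shows "block_subst D f x n = (if n < length (f (map x [0..<dec_len D x]))
      then f (map x [0..<dec_len D x]) ! n
      else block_subst D f (\<lambda>i. x (dec_len D x + i)) (n - length (f (map x [0..<dec_len D x]))))"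
  unfolding block_subst_def
  by (subst inf_concat_unfold) (use assms in \<open>simp_all add: decomp_0 decomp_Suc\<close>)

lemma block_subst_head:
  assumes "\<forall>j. f (decomp D x j) \<noteq> []" "n < length (f (map x [0..<dec_len D x]))"
  shows "block_subst D f x n = f (map x [0..<dec_len D x]) ! n"
  using block_subst_unfold[OF assms(1)] assms(2) by simp

lemma block_subst_tail:
  assumes "\<forall>j. f (decomp D x j) \<noteq> []"
  shows "block_subst D f x (length (f (map x [0..<dec_len D x])) + n)
       = block_subst D f (\<lambda>i. x (dec_len D x + i)) n"
  using block_subst_unfold[OF assms] by simp

lemma map_block_subst_add:
  assumes ne: "\<forall>j. f (decomp D x j) \<noteq> []"
  shows "map (block_subst D f x) [0..<length (f (map x [0..<dec_len D x])) + m]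
       = f (map x [0..<dec_len D x]) @ map (block_subst D f (\<lambda>i. x (dec_len D x + i))) [0..<m]"
proof -
  have "map (block_subst D f x) [0..<length (f (map x [0..<dec_len D x]))] = f (map x [0..<dec_len D x])"
    by (rule nth_equalityI) (simp_all add: block_subst_head[OF ne])
  then show ?thesis using block_subst_tail[OF ne] by (simp add: map_upt_add)
qed

lemma block_subst_Alph:
  assumes D: "admissible_code N k D" and D': "admissible_code N k D'"
    and f: "\<forall>w\<in>D. f w \<in> D'" and y: "y \<in> Omega N k"
  shows "block_subst D f y n \<in> Alph N"
  using y
proof (induction n arbitrary: y rule: less_induct)
  case (less n y)
  let ?B = "f (map y [0..<dec_len D y])"
  have B: "?B \<noteq> []" "set ?B \<subseteq> Alph N"
    using f D' dec_len_admissible(2)[OF less.prems D] unfolding admissible_code_def by auto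
  have ne: "\<forall>j. f (decomp D y j) \<noteq> []"
    using f decomp_in_code[OF less.prems D] admissible_code_nonempty[OF D'] by blast
  show ?case
  proof (cases "n < length ?B")
    case True
    then show ?thesis using B(2) nth_mem by (fastforce simp: block_subst_head[OF ne])
  next
    case False
    then have "block_subst D f y n = block_subst D f (\<lambda>i. y (dec_len D y + i)) (n - length ?B)"
      using block_subst_tail[OF ne, of "n - length ?B"] by simp
    moreover have "n - length ?B < n"
      using False B(1) by (metis diff_less length_greater_0_conv neq0_conv)
    ultimately show ?thesis using less.IH Omega_shift[OF less.prems] by simp
  qed
qed

lemma block_subst_const:
  assumes D: "admissible_code N k D" and f: "\<forall>w\<in>D. f w \<noteq> []" and fk: "f [k] = [k]"
    and k: "k \<in> Alph N"
  shows "block_subst D f (\<lambda>_. k) n = k"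
proof -
  have const: "(\<lambda>_. k) \<in> Omega N k" using k unfolding Omega_def by auto
  have ne: "\<forall>j. f (decomp D (\<lambda>_. k) j) \<noteq> []" using f decomp_in_code[OF const D] by blast
  have "dec_len D (\<lambda>_. k) = 1"
  proof (rule dec_len_eqI)
    show "map (\<lambda>_. k) [0..<1] \<in> D" using D k unfolding admissible_code_def letters_def by auto
    show "map (\<lambda>_. k) [0..<n] \<notin> D" if "1 < n" for n
      using D that unfolding admissible_code_def by (auto simp: last_map)
  qed simp
  then show ?thesis
    by (induction n) (subst block_subst_unfold[OF ne], simp add: fk)+
qed

lemma block_subst_eventually_const:
  assumes D: "admissible_code N k D" and f: "\<forall>w\<in>D. f w \<noteq> []" and fk: "f [k] = [k]"
    and y: "y \<in> Omega N k" and tail: "\<forall>i\<ge>m. y i = k"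
  shows "\<exists>m'. \<forall>i\<ge>m'. block_subst D f y i = k"
  using y tail
proof (induction m arbitrary: y rule: less_induct)
  case (less m y)
  show ?case
  proof (cases "m = 0")
    case True
    then have "y = (\<lambda>_. k)" using less.prems(2) by auto
    then show ?thesis using block_subst_const[OF D f fk Omega_letter[OF less.prems(1)]] by auto
  next
    case False
    let ?L = "dec_len D y"
    have ne: "\<forall>j. f (decomp D y j) \<noteq> []" using f decomp_in_code[OF less.prems(1) D] by blast
    have "m - ?L < m" using False dec_len_admissible(1)[OF less.prems(1) D] by simp
    moreover have "\<forall>i\<ge>m - ?L. y (?L + i) = k" using less.prems(2) by auto
    ultimately obtain m' where m': "\<forall>i\<ge>m'. block_subst D f (\<lambda>i. y (?L + i)) i = k"
      using less.IH Omega_shift[OF less.prems(1)] by blast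
    have "block_subst D f y i = k" if "m' + length (f (map y [0..<?L])) \<le> i" for i
      using that m' by (subst block_subst_unfold[OF ne]) auto
    then show ?thesis by blast
  qed
qed

lemma block_subst_Omega:
  assumes x: "x \<in> Omega N k" and D: "admissible_code N k D" and D': "admissible_code N k D'"
    and f: "\<forall>w\<in>D. f w \<in> D'" and fk: "f [k] = [k]"
  shows "block_subst D f x \<in> Omega N k"
proof -
  have f_ne: "\<forall>w\<in>D. f w \<noteq> []" using f admissible_code_nonempty[OF D'] by blast
  obtain m where "\<forall>i\<ge>m. x i = k" using x unfolding Omega_def by auto
  then show ?thesis
    using block_subst_Alph[OF D D' f x] block_subst_eventually_const[OF D f_ne fk x]
    unfolding Omega_def by blast
qed

lemma decomp_block_subst:
  assumes D: "admissible_code N k D" and f: "\<forall>w\<in>D. f w \<noteq> []"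
    and first: "\<And>y. y \<in> Omega N k \<Longrightarrow>
      dec_len D' (block_subst D f y) = length (f (map y [0..<dec_len D y]))"
    and y: "y \<in> Omega N k"
  shows "decomp D' (block_subst D f y) j = f (decomp D y j)"
  using y
proof (induction j arbitrary: y)
  case 0
  have ne: "\<forall>j. f (decomp D y j) \<noteq> []" using f decomp_in_code[OF 0 D] by blast
  show ?case using map_block_subst_add[OF ne, of 0] unfolding decomp_0 first[OF 0] by simp
next
  case (Suc j)
  have ne: "\<forall>j. f (decomp D y j) \<noteq> []" using f decomp_in_code[OF Suc.prems D] by blast
  have "(\<lambda>i. block_subst D f y (dec_len D' (block_subst D f y) + i))
      = block_subst D f (\<lambda>i. y (dec_len D y + i))"
    unfolding first[OF Suc.prems] by (rule ext) (rule block_subst_tail[OF ne])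
  then show ?case unfolding decomp_Suc using Suc.IH Omega_shift[OF Suc.prems] by simp
qed

section \<open>Tame codes\<close>

locale letter_roles =
  fixes N \<tau> \<kappa> \<alpha> \<gamma> :: nat
  assumes tau_Alph: "\<tau> \<in> Alph N" and kappa_Alph: "\<kappa> \<in> Alph N"
    and alpha_Alph: "\<alpha> \<in> Alph N" and gamma_Alph: "\<gamma> \<in> Alph N"
    and tau_kappa: "\<tau> \<noteq> \<kappa>" and tau_gamma: "\<tau> \<noteq> \<gamma>" and kappa_alpha: "\<kappa> \<noteq> \<alpha>"
    and kappa_gamma: "\<kappa> \<noteq> \<gamma>" and alpha_gamma: "\<alpha> \<noteq> \<gamma>"
begin

abbreviation "Om \<equiv> Omega N \<kappa>"
abbreviation "DM \<equiv> CM \<tau> \<kappa> \<alpha> \<gamma> \<union> letters N"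
abbreviation "DM' \<equiv> CM' \<tau> \<kappa> \<alpha> \<gamma> \<union> letters N"

definition long_head :: "nat \<Rightarrow> nat \<Rightarrow> bool" where
  "long_head a b \<longleftrightarrow> (a = \<kappa> \<and> (b = \<alpha> \<or> b = \<kappa>)) \<or> (a = \<tau> \<and> b = \<gamma>)"

definition transparent :: "nat list \<Rightarrow> bool" where
  "transparent v \<longleftrightarrow> v \<noteq> [] \<and> successively (\<lambda>a b. \<not> long_head a b) v \<and> last v \<notin> {\<kappa>, \<tau>}"

definition tame_extension :: "nat list set \<Rightarrow> nat list \<Rightarrow> nat list \<Rightarrow> bool" where
  "tame_extension D u s \<longleftrightarrow>
     (u = [\<tau>] \<and> prefix [\<gamma>, \<gamma>] s) \<or> (\<exists>j. u = [\<kappa>] \<and> prefix (replicate j \<alpha> @ [\<kappa>, \<gamma>]) s) \<or>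
     (2 \<le> length u \<and> u @ [\<gamma>] \<in> D \<and> prefix [\<gamma>] s)"

definition tame_code :: "nat list set \<Rightarrow> bool" where
  "tame_code D \<longleftrightarrow> admissible_code N \<kappa> D \<and> [\<tau>, \<gamma>, \<gamma>] \<in> D \<and> (\<forall>j. \<kappa> # replicate j \<alpha> @ [\<kappa>, \<gamma>] \<in> D) \<and>
     (\<forall>u s. u \<in> D \<longrightarrow> u @ s \<in> D \<longrightarrow> s \<noteq> [] \<longrightarrow> tame_extension D u s)"

definition tame_subst :: "nat list set \<Rightarrow> (nat list \<Rightarrow> nat list) \<Rightarrow> nat list set \<Rightarrow> bool" where
  "tame_subst D f D' \<longleftrightarrow> (\<forall>w\<in>D. f w \<in> D') \<and> (\<forall>c. f [c] = [c]) \<and>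
     (\<forall>w\<in>D. 2 \<le> length w \<longrightarrow> 2 \<le> length (f w) \<and> long_head (f w ! 0) (f w ! 1) \<and>
        (f w @ [\<gamma>] \<in> D' \<longrightarrow> w @ [\<gamma>] \<in> D))"

lemma tame_code_admissible: "tame_code D \<Longrightarrow> admissible_code N \<kappa> D"
  unfolding tame_code_def by blast

lemma tame_subst_short:
  assumes D: "admissible_code N \<kappa> D" and f: "tame_subst D f D'" and w: "w \<in> D"
    and short: "length w < 2"
  shows "f w = w" "length w = 1"
proof -
  have "w \<noteq> []" using admissible_code_nonempty[OF D w] .
  then show "length w = 1" using short by (cases w) auto
  then obtain c where "w = [c]" by (auto simp: length_Suc_conv)
  then show "f w = w" using f unfolding tame_subst_def by auto
qed

lemma tame_subst_long_iff:
  assumes D: "admissible_code N \<kappa> D" and f: "tame_subst D f D'" and w: "w \<in> D"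
  shows "2 \<le> length (f w) \<longleftrightarrow> 2 \<le> length w"
  using tame_subst_short[OF D f w] f w unfolding tame_subst_def by force

lemma tame_subst_nonempty:
  assumes D: "admissible_code N \<kappa> D" and f: "tame_subst D f D'" and w: "w \<in> D"
  shows "f w \<noteq> []"
  using tame_subst_short[OF D f w] tame_subst_long_iff[OF D f w] by fastforce

lemma long_head_first: "long_head a b \<Longrightarrow> a \<in> {\<kappa>, \<tau>}"
  unfolding long_head_def by auto

lemma block_subst_cases:
  assumes D: "admissible_code N \<kappa> D" and f: "tame_subst D f D'" and z: "z \<in> Om"
  shows "(block_subst D f z 0 = z 0 \<and>
          (\<forall>n. block_subst D f z (Suc n) = block_subst D f (\<lambda>i. z (Suc i)) n))
       \<or> long_head (block_subst D f z 0) (block_subst D f z 1)"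
proof -
  define B where "B = map z [0..<dec_len D z]"
  have B: "B \<in> D" using dec_len_admissible(2)[OF z D] by (simp add: B_def)
  have ne: "\<forall>j. f (decomp D z j) \<noteq> []"
    using tame_subst_nonempty[OF D f] decomp_in_code[OF z D] by blast
  show ?thesis
  proof (cases "2 \<le> length B")
    case True
    then have long: "2 \<le> length (f B)" "long_head (f B ! 0) (f B ! 1)"
      using f B unfolding tame_subst_def by auto
    then have "0 < length (f B)" "1 < length (f B)" by linarith+
    then have "block_subst D f z 0 = f B ! 0" "block_subst D f z 1 = f B ! 1"
      using block_subst_head[OF ne, of 0] block_subst_head[OF ne, of 1] by (simp_all add: B_def)
    with long(2) show ?thesis by simp
  next
    case False
    with tame_subst_short[OF D f B] have fB: "f B = [z 0]" "dec_len D z = 1"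
      by (auto simp: B_def)
    then have "block_subst D f z 0 = z 0"
      using block_subst_head[OF ne, of 0] by (simp add: B_def)
    moreover have "block_subst D f z (Suc n) = block_subst D f (\<lambda>i. z (Suc i)) n" for n
      using block_subst_tail[OF ne, of n] fB by (simp add: B_def)
    ultimately show ?thesis by blast
  qed
qed

lemma block_subst_transparent:
  assumes D: "admissible_code N \<kappa> D" and f: "tame_subst D f D'"
  shows "z \<in> Om \<Longrightarrow> transparent v \<Longrightarrow> map (block_subst D f z) [0..<length v] = v
    \<Longrightarrow> map z [0..<length v] = v"
proof (induction v arbitrary: z)
  case (Cons c v)
  let ?G = "block_subst D f"
  have G: "?G z 0 = c" "map (\<lambda>i. ?G z (Suc i)) [0..<length v] = v"
    using Cons.prems(3) by (simp_all only: length_Cons map_upt_Suc list.inject)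
  have "\<not> long_head (?G z 0) (?G z 1)"
  proof (cases v)
    case Nil
    then show ?thesis using Cons.prems(2) G(1) long_head_first by (auto simp: transparent_def)
  next
    case (Cons d v')
    then have "?G z 1 = d" using G(2) by (simp del: upt_Suc add: map_upt_Suc)
    then show ?thesis using Cons Cons.prems(2) G(1) by (simp add: transparent_def)
  qed
  then have z0: "z 0 = c" and shift: "\<And>n. ?G z (Suc n) = ?G (\<lambda>i. z (Suc i)) n"
    using block_subst_cases[OF D f Cons.prems(1)] G(1) by auto
  show ?case
  proof (cases "v = []")
    case False
    then have "transparent v" using Cons.prems(2) by (auto simp: transparent_def successively_Cons)
    then have "map (\<lambda>i. z (Suc i)) [0..<length v] = v"
      using Cons.IH[OF Omega_shift[OF Cons.prems(1), of 1]] G(2) shift by simp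
    then show ?thesis using z0 by (simp only: length_Cons map_upt_Suc)
  qed (simp add: z0)
qed simp

lemma transparent_gamma: "transparent [\<gamma>]"
  using kappa_gamma tau_gamma by (auto simp: transparent_def)

lemma transparent_gamma_gamma: "transparent [\<gamma>, \<gamma>]"
  using kappa_gamma tau_gamma by (auto simp: transparent_def long_head_def)

lemma transparent_alphas_kappa_gamma: "transparent (replicate j \<alpha> @ [\<kappa>, \<gamma>])"
proof -
  have "\<not> long_head \<alpha> \<alpha>" "\<not> long_head \<alpha> \<kappa>" "\<not> long_head \<kappa> \<gamma>"
    using kappa_alpha kappa_gamma alpha_gamma tau_kappa by (auto simp: long_head_def)
  then have "successively (\<lambda>a b. \<not> long_head a b) (replicate j \<alpha> @ [\<kappa>, \<gamma>])"
    by (induction j) (auto simp: successively_Cons hd_append)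
  then show ?thesis using kappa_gamma tau_gamma by (simp add: transparent_def)
qed

lemma first_block_append_transparent_notin:
  assumes D: "admissible_code N \<kappa> D" and f: "tame_subst D f D'" and y: "y \<in> Om"
    and v: "transparent v" "prefix v (map (block_subst D f (\<lambda>i. y (dec_len D y + i))) [0..<m])"
  shows "map y [0..<dec_len D y] @ v \<notin> D"
proof -
  have "map (\<lambda>i. y (dec_len D y + i)) [0..<length v] = v"
    using block_subst_transparent[OF D f Omega_shift[OF y] v(1)] map_upt_prefix[OF v(2)] by blast
  then have "map y [0..<dec_len D y] @ v = map y [0..<dec_len D y + length v]"
    by (simp add: map_upt_add)
  moreover have "dec_len D y < dec_len D y + length v" using v(1) by (simp add: transparent_def)
  ultimately show ?thesis using dec_len_admissible(3)[OF y D] by simp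
qed

lemma dec_len_block_subst:
  assumes D: "tame_code D" and D': "tame_code D'" and f: "tame_subst D f D'" and y: "y \<in> Om"
  shows "dec_len D' (block_subst D f y) = length (f (map y [0..<dec_len D y]))"
proof -
  let ?G = "block_subst D f" and ?z = "\<lambda>i. y (dec_len D y + i)"
  define B where "B = map y [0..<dec_len D y]"
  have adm: "admissible_code N \<kappa> D" "admissible_code N \<kappa> D'"
    using D D' by (simp_all add: tame_code_admissible)
  have B: "B \<in> D" using dec_len_admissible(2)[OF y adm(1)] by (simp add: B_def)
  have ne: "\<forall>j. f (decomp D y j) \<noteq> []"
    using tame_subst_nonempty[OF adm(1) f] decomp_in_code[OF y adm(1)] by blast
  have letter: "B = [c]" if "f B = [c]" for c
    using tame_subst_short[OF adm(1) f B] tame_subst_long_iff[OF adm(1) f B] that by force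
  note blocked = first_block_append_transparent_notin[OF adm(1) f y, folded B_def]
  show ?thesis
    unfolding B_def[symmetric]
  proof (rule dec_len_eqI)
    show "0 < length (f B)" using tame_subst_nonempty[OF adm(1) f B] by simp
    show "map (?G y) [0..<length (f B)] \<in> D'"
      using map_block_subst_add[OF ne, of 0] f B by (simp add: tame_subst_def B_def)
    show "map (?G y) [0..<n] \<notin> D'" if n: "length (f B) < n" for n
    proof
      define s where "s = map (?G ?z) [0..<n - length (f B)]"
      assume "map (?G y) [0..<n] \<in> D'"
      then have "f B @ s \<in> D'"
        using map_block_subst_add[OF ne, of "n - length (f B)"] n by (simp add: s_def B_def)
      moreover have "f B \<in> D'" "s \<noteq> []" using f B n by (auto simp: tame_subst_def s_def)
      ultimately consider (tau) "f B = [\<tau>]" "prefix [\<gamma>, \<gamma>] s"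
        | (kappa) j where "f B = [\<kappa>]" "prefix (replicate j \<alpha> @ [\<kappa>, \<gamma>]) s"
        | (long) "2 \<le> length (f B)" "f B @ [\<gamma>] \<in> D'" "prefix [\<gamma>] s"
        using D' unfolding tame_code_def tame_extension_def by blast
      then show False
      proof cases
        case long
        then have "B @ [\<gamma>] \<in> D"
          using f B tame_subst_long_iff[OF adm(1) f B] by (simp add: tame_subst_def)
        then show False using blocked[OF transparent_gamma] long by (simp add: s_def)
      qed (use blocked[OF transparent_gamma_gamma] blocked[OF transparent_alphas_kappa_gamma] letter D
          in \<open>auto simp: s_def tame_code_def\<close>)
    qed
  qed
qed

lemma decomp_block_subst_tame:
  assumes "tame_code D" "tame_code D'" "tame_subst D f D'" "y \<in> Om"
  shows "decomp D' (block_subst D f y) j = f (decomp D y j)"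
  using decomp_block_subst[OF tame_code_admissible[OF assms(1)] _ dec_len_block_subst[OF assms(1-3)]]
    tame_subst_nonempty[OF tame_code_admissible[OF assms(1)] assms(3)] assms(4)
  by blast

end

section \<open>The codes of M and M'\<close>

definition g0' :: "nat \<Rightarrow> nat \<Rightarrow> nat \<Rightarrow> nat \<Rightarrow> nat list \<Rightarrow> nat list" where
  "g0' \<tau> \<kappa> \<alpha> \<gamma> w =
    (if w = [\<tau>, \<gamma>, \<gamma>] then [\<kappa>, \<kappa>, \<gamma>]
     else if \<exists>k. w = \<kappa> # replicate k \<alpha> @ [\<kappa>, \<gamma>, \<gamma>] then \<kappa> # replicate (length w - 3) \<alpha> @ [\<kappa>, \<gamma>]
     else if \<exists>k. w = \<kappa> # replicate k \<alpha> @ [\<kappa>, \<gamma>] then \<tau> # replicate (length w - 1) \<gamma>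
     else w)"

context letter_roles
begin

lemma CM_last: "w \<in> CM \<tau> \<kappa> \<alpha> \<gamma> \<Longrightarrow> last w = \<gamma> \<and> 3 \<le> length w"
  unfolding CM_def by auto

lemma CM'_last: "w \<in> CM' \<tau> \<kappa> \<alpha> \<gamma> \<Longrightarrow> last w = \<gamma> \<and> 3 \<le> length w"
  unfolding CM'_def by auto

lemma admissible_code_DM: "admissible_code N \<kappa> DM"
proof (rule admissible_code_Un_letters)
  show "CM \<tau> \<kappa> \<alpha> \<gamma> \<subseteq> lists (Alph N)"
    using tau_Alph kappa_Alph alpha_Alph gamma_Alph unfolding CM_def by auto
qed (use CM_last kappa_gamma in force)

lemma admissible_code_DM': "admissible_code N \<kappa> DM'"
proof (rule admissible_code_Un_letters)
  show "CM' \<tau> \<kappa> \<alpha> \<gamma> \<subseteq> lists (Alph N)"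
    using tau_Alph kappa_Alph alpha_Alph gamma_Alph unfolding CM'_def by auto
qed (use CM'_last kappa_gamma in force)

lemma tau_gamma_gamma_in_CM: "[\<tau>, \<gamma>, \<gamma>] \<in> CM \<tau> \<kappa> \<alpha> \<gamma>"
  unfolding CM_def by (auto intro!: exI[of _ 2] simp: numeral_eq_Suc)

lemma last_ne_gamma_if_strict_prefix:
  assumes "u @ s = \<kappa> # replicate j \<alpha> @ [\<kappa>, \<gamma>]" "s \<noteq> []" "u \<noteq> []"
  shows "last u \<noteq> \<gamma>"
proof -
  have "last u \<in> set (\<kappa> # replicate j \<alpha> @ [\<kappa>])"
    by (rule last_mem_if_append_eq_snoc) (use assms in simp_all)
  then show ?thesis using kappa_gamma alpha_gamma by auto
qed

lemma DM_cases:
  assumes "u \<in> DM"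
  obtains c where "u = [c]" | "u \<in> CM \<tau> \<kappa> \<alpha> \<gamma>" "last u = \<gamma>" "3 \<le> length u"
  using assms CM_last unfolding letters_def by blast

lemma DM'_cases:
  assumes "u \<in> DM'"
  obtains c where "u = [c]" | "u \<in> CM' \<tau> \<kappa> \<alpha> \<gamma>" "last u = \<gamma>" "3 \<le> length u"
  using assms CM'_last unfolding letters_def by blast

lemma tame_extension_DM_tau_gammas:
  assumes u: "u \<in> DM" and us: "u @ s = \<tau> # replicate k \<gamma>" and k: "2 \<le> k" and s: "s \<noteq> []"
  shows "tame_extension DM u s"
  using u
proof (cases rule: DM_cases)
  case (1 c)
  moreover obtain k' where "k = Suc (Suc k')" using k by (metis add_2_eq_Suc le_Suc_ex)
  ultimately have "u = [\<tau>]" "s = \<gamma> # \<gamma> # replicate k' \<gamma>" using us by simp_all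
  then show ?thesis by (simp add: tame_extension_def)
next
  case 2
  obtain u' where u': "u = \<tau> # u'" and u's: "u' @ s = replicate k \<gamma>"
    using us 2(3) by (cases u) auto
  have "\<forall>y\<in>set u'. y = \<gamma>" "\<forall>y\<in>set s. y = \<gamma>" using arg_cong[OF u's, of set] by auto
  then have u'_gammas: "u' = replicate (length u') \<gamma>" and s_gammas: "s = replicate (length s) \<gamma>"
    using replicate_length_same by metis+
  have "u @ [\<gamma>] = \<tau> # replicate (Suc (length u')) \<gamma>"
    using u' u'_gammas by (metis append_Cons replicate_append_same replicate_Suc)
  moreover have "2 \<le> Suc (length u')" using 2(3) u' by simp
  ultimately have "u @ [\<gamma>] \<in> DM" unfolding CM_def by blast
  moreover have "prefix [\<gamma>] s" using s_gammas s by (cases s) auto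
  moreover have "2 \<le> length u" using 2(3) by simp
  ultimately show ?thesis by (simp add: tame_extension_def)
qed

lemma tame_code_DM: "tame_code DM"
proof -
  have "tame_extension DM u s" if u: "u \<in> DM" and us: "u @ s \<in> DM" and s: "s \<noteq> []" for u s
  proof -
    have "u \<noteq> []" using admissible_code_nonempty[OF admissible_code_DM u] .
    then have "u @ s \<in> CM \<tau> \<kappa> \<alpha> \<gamma>"
      using us s unfolding letters_def by (auto simp: append_eq_Cons_conv)
    then consider (tau) k where "2 \<le> k" "u @ s = \<tau> # replicate k \<gamma>"
      | (kappa) j where "u @ s = \<kappa> # replicate j \<alpha> @ [\<kappa>, \<gamma>]"
      unfolding CM_def by blast
    then show ?thesis
    proof cases
      case tau
      then show ?thesis using tame_extension_DM_tau_gammas u s by blast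
    next
      case kappa
      from u show ?thesis
      proof (cases rule: DM_cases)
        case 2
        then show ?thesis using last_ne_gamma_if_strict_prefix[OF kappa s \<open>u \<noteq> []\<close>] by simp
      qed (use kappa in \<open>auto simp: tame_extension_def\<close>)
    qed
  qed
  moreover have "\<kappa> # replicate j \<alpha> @ [\<kappa>, \<gamma>] \<in> DM" for j unfolding CM_def by blast
  ultimately show ?thesis
    using admissible_code_DM tau_gamma_gamma_in_CM unfolding tame_code_def by blast
qed

lemma tame_extension_DM'_kappa_alphas_gamma_gamma:
  assumes u: "u \<in> DM'" and us: "u @ s = \<kappa> # replicate j \<alpha> @ [\<kappa>, \<gamma>, \<gamma>]" and s: "s \<noteq> []"
  shows "tame_extension DM' u s"
  using u
proof (cases rule: DM'_cases)
  case (1 c)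
  then have "u = [\<kappa>]" "prefix (replicate j \<alpha> @ [\<kappa>, \<gamma>]) s" using us by auto
  then show ?thesis unfolding tame_extension_def by blast
next
  case 2
  have ub: "u @ butlast s = \<kappa> # replicate j \<alpha> @ [\<kappa>, \<gamma>]"
    using arg_cong[OF us, of butlast] s by (simp add: butlast_append)
  show ?thesis
  proof (cases "butlast s = []")
    case True
    moreover have "last s = \<gamma>" using arg_cong[OF us, of last] s by simp
    ultimately have "s = [\<gamma>]" using s append_butlast_last_id[OF s] by simp
    then have "u @ [\<gamma>] \<in> DM'" "prefix [\<gamma>] s" using us unfolding CM'_def by auto
    then show ?thesis using 2(3) by (simp add: tame_extension_def)
  next
    case False
    moreover have "u \<noteq> []" using 2(3) by auto
    ultimately show ?thesis using last_ne_gamma_if_strict_prefix[OF ub] 2(2) by blast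
  qed
qed

lemma tame_code_DM': "tame_code DM'"
proof -
  have "tame_extension DM' u s" if u: "u \<in> DM'" and us: "u @ s \<in> DM'" and s: "s \<noteq> []" for u s
  proof -
    have "u \<noteq> []" using admissible_code_nonempty[OF admissible_code_DM' u] .
    then have "u @ s \<in> CM' \<tau> \<kappa> \<alpha> \<gamma>"
      using us s unfolding letters_def by (auto simp: append_eq_Cons_conv)
    then consider (tgg) "u @ s = [\<tau>, \<gamma>, \<gamma>]"
      | (kagg) j where "u @ s = \<kappa> # replicate j \<alpha> @ [\<kappa>, \<gamma>, \<gamma>]"
      | (kag) j where "u @ s = \<kappa> # replicate j \<alpha> @ [\<kappa>, \<gamma>]"
      unfolding CM'_def by blast
    then show ?thesis
    proof cases
      case tgg
      from u show ?thesis
      proof (cases rule: DM'_cases)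
        case 2
        have "length u + length s = 3" using arg_cong[OF tgg, of length] by simp
        then have "length s = 0" using 2(3) by linarith
        then show ?thesis using s by simp
      qed (use tgg in \<open>auto simp: tame_extension_def\<close>)
    next
      case kagg
      then show ?thesis using tame_extension_DM'_kappa_alphas_gamma_gamma u s by blast
    next
      case kag
      from u show ?thesis
      proof (cases rule: DM'_cases)
        case (1 c)
        then have "u = [\<kappa>]" "prefix (replicate j \<alpha> @ [\<kappa>, \<gamma>]) s" using kag by auto
        then show ?thesis unfolding tame_extension_def by blast
      next
        case 2
        then show ?thesis using last_ne_gamma_if_strict_prefix[OF kag s \<open>u \<noteq> []\<close>] by simp
      qed
    qed
  qed
  moreover have "[\<tau>, \<gamma>, \<gamma>] \<in> DM'" "\<kappa> # replicate j \<alpha> @ [\<kappa>, \<gamma>] \<in> DM'" for j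
    unfolding CM'_def by blast+
  ultimately show ?thesis using admissible_code_DM' unfolding tame_code_def by blast
qed

lemma g0_tau_gammas:
  "2 \<le> k \<Longrightarrow> g0 \<tau> \<kappa> \<alpha> \<gamma> (\<tau> # replicate k \<gamma>) = \<kappa> # replicate (k - 2) \<alpha> @ [\<kappa>, \<gamma>]"
  unfolding g0_def by auto

lemma g0_kappa_alphas:
  "1 \<le> k \<Longrightarrow>
    g0 \<tau> \<kappa> \<alpha> \<gamma> (\<kappa> # replicate k \<alpha> @ [\<kappa>, \<gamma>]) = \<kappa> # replicate (k - 1) \<alpha> @ [\<kappa>, \<gamma>, \<gamma>]"
  unfolding g0_def using tau_kappa by auto

lemma g0_kappa_kappa_gamma: "g0 \<tau> \<kappa> \<alpha> \<gamma> [\<kappa>, \<kappa>, \<gamma>] = [\<tau>, \<gamma>, \<gamma>]"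
proof -
  have "[\<kappa>, \<kappa>, \<gamma>] \<noteq> \<kappa> # replicate k \<alpha> @ [\<kappa>, \<gamma>]" if "1 \<le> k" for k
    using arg_cong[of _ _ length] that by fastforce
  then show ?thesis unfolding g0_def using tau_kappa by auto
qed

lemma g0_letter: "g0 \<tau> \<kappa> \<alpha> \<gamma> [c] = [c]"
  unfolding g0_def by auto

lemma kappa_alphas_kappa_gamma_neq:
  "\<kappa> # replicate k \<alpha> @ [\<kappa>, \<gamma>] \<noteq> \<kappa> # replicate j \<alpha> @ [\<kappa>, \<gamma>, \<gamma>]"
  using arg_cong[of _ _ rev] kappa_gamma by fastforce

lemma g0'_tau_gamma_gamma: "g0' \<tau> \<kappa> \<alpha> \<gamma> [\<tau>, \<gamma>, \<gamma>] = [\<kappa>, \<kappa>, \<gamma>]"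
  unfolding g0'_def by simp

lemma g0'_kappa_alphas_gamma_gamma:
  "g0' \<tau> \<kappa> \<alpha> \<gamma> (\<kappa> # replicate k \<alpha> @ [\<kappa>, \<gamma>, \<gamma>]) = \<kappa> # replicate (Suc k) \<alpha> @ [\<kappa>, \<gamma>]"
  unfolding g0'_def using tau_kappa by auto

lemma g0'_kappa_alphas_gamma:
  "g0' \<tau> \<kappa> \<alpha> \<gamma> (\<kappa> # replicate k \<alpha> @ [\<kappa>, \<gamma>]) = \<tau> # replicate (k + 2) \<gamma>"
  unfolding g0'_def using tau_kappa kappa_alphas_kappa_gamma_neq by auto

lemma g0'_letter: "g0' \<tau> \<kappa> \<alpha> \<gamma> [c] = [c]"
  unfolding g0'_def by auto

lemma DM_shape_cases:
  assumes "w \<in> DM"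
  obtains k where "2 \<le> k" "w = \<tau> # replicate k \<gamma>"
  | k where "1 \<le> k" "w = \<kappa> # replicate k \<alpha> @ [\<kappa>, \<gamma>]"
  | "w = [\<kappa>, \<kappa>, \<gamma>]"
  | c where "w = [c]"
proof -
  consider (tau) "\<exists>k\<ge>2. w = \<tau> # replicate k \<gamma>" | (kappa) k where "w = \<kappa> # replicate k \<alpha> @ [\<kappa>, \<gamma>]"
    | (letter) "\<exists>c. w = [c]"
    using assms unfolding CM_def letters_def by blast
  then show ?thesis
  proof cases
    case kappa
    show ?thesis
    proof (cases "k = 0")
      case True
      then show ?thesis using kappa that(3) by simp
    next
      case False
      then show ?thesis using kappa that(2)[of k] by simp
    qed
  qed (use that in blast)+
qed

lemma DM'_shape_cases:
  assumes "w \<in> DM'"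
  obtains "w = [\<tau>, \<gamma>, \<gamma>]"
  | k where "w = \<kappa> # replicate k \<alpha> @ [\<kappa>, \<gamma>, \<gamma>]"
  | k where "w = \<kappa> # replicate k \<alpha> @ [\<kappa>, \<gamma>]"
  | c where "w = [c]"
  using assms unfolding CM'_def letters_def by blast

lemma triple_gamma_notin_DM': "w @ [\<gamma>, \<gamma>, \<gamma>] \<notin> DM'"
  using kappa_gamma tau_gamma unfolding CM'_def letters_def by (auto dest!: arg_cong[of _ _ rev])

lemma kappa_gamma_gamma_notin_DM: "\<kappa> # w @ [\<gamma>, \<gamma>] \<notin> DM"
  using kappa_gamma tau_kappa unfolding CM_def letters_def by (auto dest!: arg_cong[of _ _ rev])

lemma tame_subst_g0: "tame_subst DM (g0 \<tau> \<kappa> \<alpha> \<gamma>) DM'"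
proof -
  let ?g = "g0 \<tau> \<kappa> \<alpha> \<gamma>"
  have into: "?g w \<in> DM'" if "w \<in> DM" for w
    using that
  proof (cases rule: DM_shape_cases)
    case (1 k)
    then show ?thesis by (simp add: g0_tau_gammas CM'_def)
  next
    case (2 k)
    then show ?thesis by (simp add: g0_kappa_alphas CM'_def)
  next
    case 3
    then show ?thesis by (simp add: g0_kappa_kappa_gamma CM'_def)
  qed (use that CM_last in \<open>fastforce simp: g0_letter\<close>)
  have long: "2 \<le> length (?g w) \<and> long_head (?g w ! 0) (?g w ! 1) \<and> (?g w @ [\<gamma>] \<in> DM' \<longrightarrow> w @ [\<gamma>] \<in> DM)"
    if "w \<in> DM" "2 \<le> length w" for w
    using that(1)
  proof (cases rule: DM_shape_cases)
    case (1 k)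
    have "w @ [\<gamma>] = \<tau> # replicate (Suc k) \<gamma>" "2 \<le> Suc k"
      using 1 by (simp_all add: replicate_append_same)
    then have "w @ [\<gamma>] \<in> DM" unfolding CM_def by blast
    then show ?thesis using 1 by (simp add: g0_tau_gammas long_head_def nth_append)
  next
    case (2 k)
    have "?g w @ [\<gamma>] \<notin> DM'"
      using 2 triple_gamma_notin_DM'[of "\<kappa> # replicate (k - 1) \<alpha> @ [\<kappa>]"] by (simp add: g0_kappa_alphas)
    then show ?thesis using 2 by (simp add: g0_kappa_alphas long_head_def nth_append)
  next
    case 3
    have "?g w @ [\<gamma>] \<notin> DM'"
      using 3 triple_gamma_notin_DM'[of "[\<tau>]"] by (simp add: g0_kappa_kappa_gamma)
    then show ?thesis using 3 by (simp add: g0_kappa_kappa_gamma long_head_def)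
  qed (use that in simp)
  show ?thesis unfolding tame_subst_def using into long g0_letter by blast
qed

lemma tame_subst_g0': "tame_subst DM' (g0' \<tau> \<kappa> \<alpha> \<gamma>) DM"
proof -
  let ?g = "g0' \<tau> \<kappa> \<alpha> \<gamma>"
  have into: "?g w \<in> DM" if "w \<in> DM'" for w
    using that
  proof (cases rule: DM'_shape_cases)
    case 1
    then show ?thesis by (simp add: g0'_tau_gamma_gamma CM_def)
  next
    case (2 k)
    then show ?thesis unfolding CM_def by (simp add: g0'_kappa_alphas_gamma_gamma del: replicate_Suc)
  next
    case (3 k)
    then show ?thesis unfolding CM_def by (simp add: g0'_kappa_alphas_gamma del: replicate_Suc)
  qed (use that CM'_last in \<open>fastforce simp: g0'_letter\<close>)
  have long: "2 \<le> length (?g w) \<and> long_head (?g w ! 0) (?g w ! 1) \<and> (?g w @ [\<gamma>] \<in> DM \<longrightarrow> w @ [\<gamma>] \<in> DM')"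
    if "w \<in> DM'" "2 \<le> length w" for w
    using that(1)
  proof (cases rule: DM'_shape_cases)
    case 1
    have "?g w @ [\<gamma>] \<notin> DM"
      using 1 kappa_gamma_gamma_notin_DM[of "[\<kappa>]"] by (simp add: g0'_tau_gamma_gamma)
    then show ?thesis using 1 by (simp add: g0'_tau_gamma_gamma long_head_def)
  next
    case (2 k)
    have "?g w @ [\<gamma>] \<notin> DM"
      using 2 kappa_gamma_gamma_notin_DM[of "replicate (Suc k) \<alpha> @ [\<kappa>]"]
      by (simp add: g0'_kappa_alphas_gamma_gamma del: replicate_Suc)
    then show ?thesis using 2 by (simp add: g0'_kappa_alphas_gamma_gamma long_head_def)
  next
    case (3 k)
    have "w @ [\<gamma>] \<in> DM'" using 3 unfolding CM'_def by simp
    then show ?thesis using 3 by (simp add: g0'_kappa_alphas_gamma long_head_def)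
  qed (use that in simp)
  show ?thesis unfolding tame_subst_def using into long g0'_letter by blast
qed

lemma g0'_g0:
  assumes "w \<in> DM"
  shows "g0' \<tau> \<kappa> \<alpha> \<gamma> (g0 \<tau> \<kappa> \<alpha> \<gamma> w) = w"
  using assms
proof (cases rule: DM_shape_cases)
  case (1 k)
  then have "k - 2 + 2 = k" by simp
  then show ?thesis using 1 by (simp add: g0_tau_gammas g0'_kappa_alphas_gamma)
qed (simp_all add: g0_kappa_alphas g0_kappa_kappa_gamma g0_letter g0'_tau_gamma_gamma
    g0'_kappa_alphas_gamma_gamma g0'_letter del: replicate_Suc)

lemma g0_g0':
  assumes "w \<in> DM'"
  shows "g0 \<tau> \<kappa> \<alpha> \<gamma> (g0' \<tau> \<kappa> \<alpha> \<gamma> w) = w"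
  using assms
proof (cases rule: DM'_shape_cases)
  case (2 k)
  then show ?thesis using g0_kappa_alphas[of "Suc k"] by (simp add: g0'_kappa_alphas_gamma_gamma)
next
  case (3 k)
  then show ?thesis using g0_tau_gammas[of "k + 2"] by (simp add: g0'_kappa_alphas_gamma)
qed (simp_all add: g0_kappa_kappa_gamma g0_letter g0'_tau_gamma_gamma g0'_letter)

lemma g0_inv_eq: "w \<in> DM' \<Longrightarrow> g0_inv N \<tau> \<kappa> \<alpha> \<gamma> w = g0' \<tau> \<kappa> \<alpha> \<gamma> w"
  unfolding g0_inv_def
  by (rule the_inv_into_f_eq[OF inj_on_inverseI[where g = "g0' \<tau> \<kappa> \<alpha> \<gamma>", OF g0'_g0] g0_g0'])
    (use tame_subst_g0' in \<open>auto simp: tame_subst_def\<close>)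

lemma gmap_eq_block_subst: "gmap N \<tau> \<kappa> \<alpha> \<gamma> = block_subst DM (g0 \<tau> \<kappa> \<alpha> \<gamma>)"
  by (rule ext) (simp add: gmap_def block_subst_def)

lemma hmap_eq_block_subst:
  assumes u: "u \<in> Om"
  shows "hmap N \<tau> \<kappa> \<alpha> \<gamma> u = block_subst DM' (g0' \<tau> \<kappa> \<alpha> \<gamma>) u"
  using g0_inv_eq[OF decomp_in_code[OF u admissible_code_DM']]
  by (simp add: hmap_def block_subst_def)

lemma decomp_gmap:
  "x \<in> Om \<Longrightarrow> decomp DM' (gmap N \<tau> \<kappa> \<alpha> \<gamma> x) = (\<lambda>j. g0 \<tau> \<kappa> \<alpha> \<gamma> (decomp DM x j))"
  unfolding gmap_eq_block_subst
  using decomp_block_subst_tame[OF tame_code_DM tame_code_DM' tame_subst_g0] by blast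

lemma decomp_hmap:
  assumes u: "u \<in> Om"
  shows "decomp DM (hmap N \<tau> \<kappa> \<alpha> \<gamma> u) = (\<lambda>j. g0_inv N \<tau> \<kappa> \<alpha> \<gamma> (decomp DM' u j))"
  unfolding hmap_eq_block_subst[OF u]
  using decomp_block_subst_tame[OF tame_code_DM' tame_code_DM tame_subst_g0' u]
    g0_inv_eq[OF decomp_in_code[OF u admissible_code_DM']] by (simp add: fun_eq_iff)

lemma bij_gmap: "bij_betw (gmap N \<tau> \<kappa> \<alpha> \<gamma>) Om Om"
proof (rule bij_betwI')
  fix x x' assume x: "x \<in> Om" and x': "x' \<in> Om"
  show "gmap N \<tau> \<kappa> \<alpha> \<gamma> x = gmap N \<tau> \<kappa> \<alpha> \<gamma> x' \<longleftrightarrow> x = x'"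
  proof
    assume "gmap N \<tau> \<kappa> \<alpha> \<gamma> x = gmap N \<tau> \<kappa> \<alpha> \<gamma> x'"
    then have same_image: "g0 \<tau> \<kappa> \<alpha> \<gamma> (decomp DM x j) = g0 \<tau> \<kappa> \<alpha> \<gamma> (decomp DM x' j)" for j
      using decomp_gmap[OF x] decomp_gmap[OF x'] by metis
    have "decomp DM x j = decomp DM x' j" for j
      using same_image[of j] g0'_g0[OF decomp_in_code[OF x admissible_code_DM, of j]]
        g0'_g0[OF decomp_in_code[OF x' admissible_code_DM, of j]] by metis
    then show "x = x'"
      using inf_concat_decomp[OF admissible_code_DM x] inf_concat_decomp[OF admissible_code_DM x']
      by (metis ext)
  qed simp
next
  fix x assume "x \<in> Om"
  then show "gmap N \<tau> \<kappa> \<alpha> \<gamma> x \<in> Om"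
    unfolding gmap_eq_block_subst
    using block_subst_Omega[OF _ admissible_code_DM admissible_code_DM'] tame_subst_g0
    by (simp add: tame_subst_def)
next
  fix u assume u: "u \<in> Om"
  define x where "x = hmap N \<tau> \<kappa> \<alpha> \<gamma> u"
  have "x \<in> Om"
    unfolding x_def hmap_eq_block_subst[OF u]
    using block_subst_Omega[OF u admissible_code_DM' admissible_code_DM] tame_subst_g0'
    by (simp add: tame_subst_def)
  moreover have "gmap N \<tau> \<kappa> \<alpha> \<gamma> x = inf_concat (decomp DM' u)"
    using decomp_hmap[OF u] g0_g0' g0_inv_eq decomp_in_code[OF u admissible_code_DM']
    by (simp add: gmap_def x_def)
  moreover have "inf_concat (decomp DM' u) = u"
    using inf_concat_decomp[OF admissible_code_DM' u] by (rule ext)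
  ultimately show "\<exists>x\<in>Om. u = gmap N \<tau> \<kappa> \<alpha> \<gamma> x" by metis
qed

end

theorem proposition7p1:
  fixes N \<tau> \<kappa> \<alpha> \<gamma> :: nat
  assumes "N \<ge> 4"
    and "\<tau> \<in> Alph N" "\<kappa> \<in> Alph N" "\<alpha> \<in> Alph N" "\<gamma> \<in> Alph N"
    and "\<tau> \<noteq> \<kappa>" "\<tau> \<noteq> \<gamma>" "\<kappa> \<noteq> \<alpha>" "\<kappa> \<noteq> \<gamma>" "\<alpha> \<noteq> \<gamma>"
  shows "(\<forall>x \<in> Omega N \<kappa>.
           decomp (CM' \<tau> \<kappa> \<alpha> \<gamma> \<union> letters N) (gmap N \<tau> \<kappa> \<alpha> \<gamma> x)
             = (\<lambda>j. g0 \<tau> \<kappa> \<alpha> \<gamma> (decomp (CM \<tau> \<kappa> \<alpha> \<gamma> \<union> letters N) x j))) \<and>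
         (\<forall>u \<in> Omega N \<kappa>.
           decomp (CM \<tau> \<kappa> \<alpha> \<gamma> \<union> letters N) (hmap N \<tau> \<kappa> \<alpha> \<gamma> u)
             = (\<lambda>j. g0_inv N \<tau> \<kappa> \<alpha> \<gamma> (decomp (CM' \<tau> \<kappa> \<alpha> \<gamma> \<union> letters N) u j))) \<and>
         bij_betw (gmap N \<tau> \<kappa> \<alpha> \<gamma>) (Omega N \<kappa>) (Omega N \<kappa>)"
proof -
  interpret letter_roles N \<tau> \<kappa> \<alpha> \<gamma>
    by unfold_locales (use assms in auto)
  show ?thesis using decomp_gmap decomp_hmap bij_gmap by blast
qed

end
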